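(* Let $\Lambda$ be a strongly connected finite $k$-graph, and suppose $v\in\Lambda^0$ and $m,n\in\mathbb{N}^k$ satisfy $\sigma^m(x)=\sigma^n(x)$ for all $x\in Z(v)$. Then: (1) $\sigma^m(x)=\sigma^n(x)$ for all $x\in\Lambda^\infty$. (2) For each $\mu\in\Lambda^m$ there is a unique $\theta_{m,n}(\mu)\in\Lambda^n$ such that $\mu x=\theta_{m,n}(\mu)x$ for all $x\in Z(s(\mu))$; the map $\theta_{m,n}:\Lambda^m\to\Lambda^n$ preserves range and source. (3) If $w\in\Lambda^0$ and $p\in\mathbb{N}^k$ also satisfy $\sigma^n(x)=\sigma^p(x)$ for all $x\in Z(w)$, then $\sigma^m(x)=\sigma^p(x)$ for all $x\in\Lambda^\infty$ and $\theta_{n,p}\circ\theta_{m,n}=\theta_{m,p}$. (4) Each $\theta_{m,m}$ is the identity of $\Lambda^m$, and each $\theta_{m,n}$ is a bijection with $\theta_{m,n}^{-1}=\theta_{n,m}$.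
   Context: A $k$-graph is a countable category $\Lambda$ with a functor $d:\Lambda\to\mathbb{N}^k$ such that whenever $d(\lambda)=m+n$ there are unique $\mu,\nu$ with $d(\mu)=m$, $d(\nu)=n$, $\lambda=\mu\nu$. $\Lambda^n=d^{-1}(n)$, $\Lambda^0$ = vertices, $r,s$ range and source. Standing convention: $\Lambda^{e_i}\neq\emptyset$ for each $i$. Finite: each $\Lambda^n$ finite; strongly connected: $v\Lambda w\neq\emptyset$ for all vertices. Infinite paths: $\Omega_k=\{(m,n)\in\mathbb{N}^k\times\mathbb{N}^k:m\le n\}$ is a $k$-graph with $r(m,n)=(m,m)$, $s(m,n)=(n,n)$, $(m,n)(n,p)=(m,p)$, $d(m,n)=n-m$; an infinite path is a degree-preserving functor $x:\Omega_k\to\Lambda$; $\Lambda^\infty$ their set; $r(x)=x(0,0)$; $\sigma^n(x)(p,q)=x(n+p,n+q)$; for $s(\lambda)=r(x)$, $\lambda x$ is the unique infinite path with $(\lambda x)(0,d(\lambda))=\lambda$ and $\sigma^{d(\lambda)}(\lambda x)=x$; $Z(\lambda)=\{x:x(0,d(\lambda))=\lambda\}$ (so $Z(v)=\{x:r(x)=v\}$). *)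

theory Defs
  imports Main "HOL-Library.Countable_Set"
begin

text \<open>Degrees live in N^k, rendered as functions 'k => nat for a finite index type 'k
  (so k = CARD('k)). Morphisms of the k-graph have type 'a; objects (vertices) are
  identified with identity morphisms.\<close>

record ('a, 'k) kgraph =
  Mor :: "'a set"
  rg  :: "'a \<Rightarrow> 'a"
  sc  :: "'a \<Rightarrow> 'a"
  cmp :: "'a \<Rightarrow> 'a \<Rightarrow> 'a"
  dg  :: "'a \<Rightarrow> 'k \<Rightarrow> nat"

definition dadd :: "('k \<Rightarrow> nat) \<Rightarrow> ('k \<Rightarrow> nat) \<Rightarrow> 'k \<Rightarrow> nat" where
  "dadd m n = (\<lambda>i. m i + n i)"

definition dsub :: "('k \<Rightarrow> nat) \<Rightarrow> ('k \<Rightarrow> nat) \<Rightarrow> 'k \<Rightarrow> nat" where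
  "dsub n m = (\<lambda>i. n i - m i)"

definition dzero :: "'k \<Rightarrow> nat" where "dzero = (\<lambda>i. 0)"

definition unitdeg :: "'k \<Rightarrow> 'k \<Rightarrow> nat" where
  "unitdeg i = (\<lambda>j. if j = i then 1 else 0)"

definition Lam :: "('a, 'k) kgraph \<Rightarrow> ('k \<Rightarrow> nat) \<Rightarrow> 'a set" where
  "Lam G n = {l \<in> Mor G. dg G l = n}"

definition vertices :: "('a, 'k) kgraph \<Rightarrow> 'a set" where
  "vertices G = {v \<in> Mor G. rg G v = v \<and> sc G v = v}"

definition kgraph :: "('a, 'k::finite) kgraph \<Rightarrow> bool" where
  "kgraph G \<longleftrightarrow>
     countable (Mor G) \<and>
     (\<forall>l\<in>Mor G. rg G l \<in> Mor G \<and> sc G l \<in> Mor G \<and>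
        rg G (rg G l) = rg G l \<and> sc G (rg G l) = rg G l \<and>
        rg G (sc G l) = sc G l \<and> sc G (sc G l) = sc G l \<and>
        cmp G (rg G l) l = l \<and> cmp G l (sc G l) = l) \<and>
     (\<forall>l\<in>Mor G. \<forall>l'\<in>Mor G. sc G l = rg G l' \<longrightarrow>
        cmp G l l' \<in> Mor G \<and> rg G (cmp G l l') = rg G l \<and> sc G (cmp G l l') = sc G l' \<and>
        dg G (cmp G l l') = dadd (dg G l) (dg G l')) \<and>
     (\<forall>a\<in>Mor G. \<forall>b\<in>Mor G. \<forall>c\<in>Mor G. sc G a = rg G b \<and> sc G b = rg G c \<longrightarrow>
        cmp G (cmp G a b) c = cmp G a (cmp G b c)) \<and>
     (\<forall>l\<in>Mor G. \<forall>m n. dg G l = dadd m n \<longrightarrow>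
        (\<exists>!p. fst p \<in> Mor G \<and> snd p \<in> Mor G \<and> sc G (fst p) = rg G (snd p) \<and>
              dg G (fst p) = m \<and> dg G (snd p) = n \<and> l = cmp G (fst p) (snd p))) \<and>
     (\<forall>i. Lam G (unitdeg i) \<noteq> {})"

definition finite_kgraph :: "('a, 'k) kgraph \<Rightarrow> bool" where
  "finite_kgraph G \<longleftrightarrow> (\<forall>n. finite (Lam G n))"

definition strongly_connected :: "('a, 'k) kgraph \<Rightarrow> bool" where
  "strongly_connected G \<longleftrightarrow>
     (\<forall>v\<in>vertices G. \<forall>w\<in>vertices G. \<exists>l\<in>Mor G. rg G l = v \<and> sc G l = w)"

text \<open>Infinite paths: degree-preserving functors Omega_k -> Lambda. A path is a function
  x m n defined on pairs m <= n (value undefined elsewhere); x m m is the image of the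
  object (m,m).\<close>

definition paths :: "('a, 'k::finite) kgraph \<Rightarrow> (('k \<Rightarrow> nat) \<Rightarrow> ('k \<Rightarrow> nat) \<Rightarrow> 'a) set" where
  "paths G = {x. (\<forall>m n. \<not> m \<le> n \<longrightarrow> x m n = undefined) \<and>
     (\<forall>m. x m m \<in> vertices G) \<and>
     (\<forall>m n. m \<le> n \<longrightarrow> x m n \<in> Mor G \<and> dg G (x m n) = dsub n m \<and>
              rg G (x m n) = x m m \<and> sc G (x m n) = x n n) \<and>
     (\<forall>m n p. m \<le> n \<and> n \<le> p \<longrightarrow> cmp G (x m n) (x n p) = x m p)}"

definition shift :: "('k \<Rightarrow> nat) \<Rightarrow> (('k \<Rightarrow> nat) \<Rightarrow> ('k \<Rightarrow> nat) \<Rightarrow> 'a)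
                      \<Rightarrow> (('k \<Rightarrow> nat) \<Rightarrow> ('k \<Rightarrow> nat) \<Rightarrow> 'a)" where
  "shift n x = (\<lambda>p q. x (dadd n p) (dadd n q))"

definition prange :: "(('k \<Rightarrow> nat) \<Rightarrow> ('k \<Rightarrow> nat) \<Rightarrow> 'a) \<Rightarrow> 'a" where
  "prange x = x dzero dzero"

definition cyl :: "('a, 'k::finite) kgraph \<Rightarrow> 'a \<Rightarrow> (('k \<Rightarrow> nat) \<Rightarrow> ('k \<Rightarrow> nat) \<Rightarrow> 'a) set" where
  "cyl G v = {x \<in> paths G. prange x = v}"

text \<open>Concatenation lambda x (meaningful when s(lambda) = r(x)).\<close>
definition pcat :: "('a, 'k::finite) kgraph \<Rightarrow> 'a \<Rightarrow> (('k \<Rightarrow> nat) \<Rightarrow> ('k \<Rightarrow> nat) \<Rightarrow> 'a)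
                     \<Rightarrow> (('k \<Rightarrow> nat) \<Rightarrow> ('k \<Rightarrow> nat) \<Rightarrow> 'a)" where
  "pcat G l x = (THE y. y \<in> paths G \<and> y dzero (dg G l) = l \<and> shift (dg G l) y = x)"

text \<open>theta_{m,n}(mu): the unique nu in Lambda^n with mu x = nu x for all x in Z(s(mu))
  (the equation being well-typed, i.e. s(nu) = r(x)).\<close>
definition theta :: "('a, 'k::finite) kgraph \<Rightarrow> ('k \<Rightarrow> nat) \<Rightarrow> ('k \<Rightarrow> nat) \<Rightarrow> 'a \<Rightarrow> 'a" where
  "theta G m n mu = (THE nu. nu \<in> Lam G n \<and>
      (\<forall>x\<in>cyl G (sc G mu). sc G nu = prange x \<and> pcat G mu x = pcat G nu x))"

end

theory Submission
  imports Defs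
begin

text \<open>Strong connectivity gives a path \<open>\<lambda>\<close> from \<open>v\<close> to the range of any infinite path \<open>x\<close>;
  then \<open>\<lambda>x \<in> Z(v)\<close> and \<open>\<sigma>\<^sup>m x = \<sigma>\<^sup>m \<sigma>\<^bsup>d(\<lambda>)\<^esup> (\<lambda>x) = \<sigma>\<^bsup>d(\<lambda>)\<^esup> \<sigma>\<^sup>m (\<lambda>x)\<close>, so \<open>\<sigma>\<^sup>m = \<sigma>\<^sup>n\<close> on all of \<open>\<Lambda>\<^sup>\<infinity>\<close>.
  For \<open>\<mu> \<in> \<Lambda>\<^sup>m\<close> and \<open>x \<in> Z(s(\<mu>))\<close> we then have \<open>\<sigma>\<^sup>n(\<mu>x) = x\<close>, hence \<open>\<mu>x = (\<mu>x)(0,n) x\<close>; and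
  \<open>(\<mu>x)(0,n)\<close> is determined by \<open>(\<mu>x)(0,m) = \<mu>\<close> alone, which defines \<open>\<theta>\<^bsub>m,n\<^esub>(\<mu>)\<close>.
  Identity, composition and inverse laws follow from uniqueness, using that \<open>Z(w)\<close> is never empty
  (wind around a loop of positive degree).\<close>

lemma dadd_commute: "dadd m n = dadd n m"
  by (auto simp: dadd_def fun_eq_iff)

lemma dadd_assoc: "dadd (dadd a b) c = dadd a (dadd b c)"
  by (auto simp: dadd_def fun_eq_iff)

lemma dadd_dsub: "m \<le> n \<Longrightarrow> dadd m (dsub n m) = n"
  by (auto simp: dadd_def dsub_def le_fun_def fun_eq_iff)

lemma dsub_dadd_cancel [simp]: "dsub (dadd m n) m = n"
  by (auto simp: dadd_def dsub_def fun_eq_iff)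

lemma dsub_dadd_dadd: "dsub (dadd a q) (dadd a p) = dsub q p"
  by (auto simp: dadd_def dsub_def fun_eq_iff)

lemma dadd_dzero [simp]: "dadd dzero n = n" "dadd n dzero = n"
  by (auto simp: dadd_def dzero_def fun_eq_iff)

lemma dsub_dzero [simp]: "dsub n dzero = n" "dsub n n = dzero"
  by (auto simp: dsub_def dzero_def fun_eq_iff)

lemma dsub_dsub: "d \<le> e \<Longrightarrow> dsub e (dsub e d) = d"
  by (auto simp: dsub_def le_fun_def fun_eq_iff)

lemma dsub_le: "dsub e d \<le> e"
  by (auto simp: dsub_def le_fun_def)

lemma dzero_le [simp]: "dzero \<le> n"
  by (auto simp: dzero_def le_fun_def)

lemma le_dadd [simp]: "m \<le> dadd m n" "n \<le> dadd m n"
  by (auto simp: dadd_def le_fun_def)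

lemma dadd_le_dadd_iff [simp]: "dadd a p \<le> dadd a q \<longleftrightarrow> p \<le> q"
  by (auto simp: dadd_def le_fun_def)

lemma dadd_left_eq_self: "dadd a n = n \<Longrightarrow> a = dzero"
  by (auto simp: dadd_def fun_eq_iff dzero_def)

lemma le_Max_range: "q \<le> (\<lambda>_. Max (range (q :: 'k::finite \<Rightarrow> nat)))"
  by (auto simp: le_fun_def intro: Max_ge)

definition factor :: "('a, 'k) kgraph \<Rightarrow> 'a \<Rightarrow> ('k \<Rightarrow> nat) \<Rightarrow> 'a \<times> 'a" where
  "factor G l q = (THE p. fst p \<in> Mor G \<and> snd p \<in> Mor G \<and> sc G (fst p) = rg G (snd p) \<and>
      dg G (fst p) = q \<and> dg G (snd p) = dsub (dg G l) q \<and> l = cmp G (fst p) (snd p))"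

definition init_seg :: "('a, 'k) kgraph \<Rightarrow> 'a \<Rightarrow> ('k \<Rightarrow> nat) \<Rightarrow> 'a" where
  "init_seg G l q = fst (factor G l q)"

definition final_seg :: "('a, 'k) kgraph \<Rightarrow> 'a \<Rightarrow> ('k \<Rightarrow> nat) \<Rightarrow> 'a" where
  "final_seg G l q = snd (factor G l q)"

definition path_of_inits ::
    "('a, 'k) kgraph \<Rightarrow> (('k \<Rightarrow> nat) \<Rightarrow> 'a) \<Rightarrow> ('k \<Rightarrow> nat) \<Rightarrow> ('k \<Rightarrow> nat) \<Rightarrow> 'a" where
  "path_of_inits G f = (\<lambda>p q. if p \<le> q then final_seg G (f q) p else undefined)"

definition loop_pow :: "('a, 'k) kgraph \<Rightarrow> 'a \<Rightarrow> nat \<Rightarrow> 'a" where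
  "loop_pow G l N = ((\<lambda>c. cmp G c l) ^^ N) (rg G l)"

abbreviation shifts_agree :: "('a, 'k::finite) kgraph \<Rightarrow> ('k \<Rightarrow> nat) \<Rightarrow> ('k \<Rightarrow> nat) \<Rightarrow> bool" where
  "shifts_agree G m n \<equiv> \<forall>x\<in>paths G. shift m x = shift n x"

locale k_graph =
  fixes G :: "('a, 'k::finite) kgraph"
  assumes kgraph: "kgraph G"
begin

lemma mor_rg_sc:
  assumes "l \<in> Mor G"
  shows "rg G l \<in> Mor G" "sc G l \<in> Mor G" "rg G (rg G l) = rg G l" "sc G (rg G l) = rg G l"
    "rg G (sc G l) = sc G l" "sc G (sc G l) = sc G l" "cmp G (rg G l) l = l" "cmp G l (sc G l) = l"
  using kgraph assms unfolding kgraph_def by blast+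

lemma cmp_mor:
  assumes "a \<in> Mor G" "b \<in> Mor G" "sc G a = rg G b"
  shows "cmp G a b \<in> Mor G" "rg G (cmp G a b) = rg G a" "sc G (cmp G a b) = sc G b"
    "dg G (cmp G a b) = dadd (dg G a) (dg G b)"
  using kgraph assms unfolding kgraph_def by blast+

lemma cmp_assoc:
  assumes "a \<in> Mor G" "b \<in> Mor G" "c \<in> Mor G" "sc G a = rg G b" "sc G b = rg G c"
  shows "cmp G (cmp G a b) c = cmp G a (cmp G b c)"
  using kgraph assms unfolding kgraph_def by blast

lemma factorisation_ex1:
  assumes "l \<in> Mor G" "dg G l = dadd m n"
  shows "\<exists>!p. fst p \<in> Mor G \<and> snd p \<in> Mor G \<and> sc G (fst p) = rg G (snd p) \<and>
              dg G (fst p) = m \<and> dg G (snd p) = n \<and> l = cmp G (fst p) (snd p)"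
  using kgraph assms unfolding kgraph_def by blast

lemma Lam_unitdeg_nonempty: "Lam G (unitdeg i) \<noteq> {}"
  using kgraph unfolding kgraph_def by blast

lemma vertices_rg_sc: "l \<in> Mor G \<Longrightarrow> rg G l \<in> vertices G" "l \<in> Mor G \<Longrightarrow> sc G l \<in> vertices G"
  using mor_rg_sc by (auto simp: vertices_def)

lemma verticesD: "v \<in> vertices G \<Longrightarrow> v \<in> Mor G" "v \<in> vertices G \<Longrightarrow> rg G v = v"
  "v \<in> vertices G \<Longrightarrow> sc G v = v"
  by (auto simp: vertices_def)

lemma dg_vertex:
  assumes "v \<in> vertices G"
  shows "dg G v = dzero"
proof -
  have v: "v \<in> Mor G" "rg G v = v" "sc G v = v"
    using assms by (auto simp: vertices_def)
  then have "cmp G v v = v"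
    using mor_rg_sc(7)[OF v(1)] by simp
  then have "dadd (dg G v) (dg G v) = dg G v"
    using cmp_mor(4)[of v v] v by simp
  then show ?thesis by (rule dadd_left_eq_self)
qed

lemma dg_rg_sc: "l \<in> Mor G \<Longrightarrow> dg G (rg G l) = dzero" "l \<in> Mor G \<Longrightarrow> dg G (sc G l) = dzero"
  using dg_vertex vertices_rg_sc by auto

lemma init_final_seg:
  assumes "l \<in> Mor G" "q \<le> dg G l"
  shows "init_seg G l q \<in> Mor G" "final_seg G l q \<in> Mor G"
    "sc G (init_seg G l q) = rg G (final_seg G l q)"
    "dg G (init_seg G l q) = q" "dg G (final_seg G l q) = dsub (dg G l) q"
    "cmp G (init_seg G l q) (final_seg G l q) = l"
proof -
  have "dg G l = dadd q (dsub (dg G l) q)"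
    using assms(2) by (simp add: dadd_dsub)
  from theI'[OF factorisation_ex1[OF assms(1) this]]
  show "init_seg G l q \<in> Mor G" "final_seg G l q \<in> Mor G"
    "sc G (init_seg G l q) = rg G (final_seg G l q)"
    "dg G (init_seg G l q) = q" "dg G (final_seg G l q) = dsub (dg G l) q"
    "cmp G (init_seg G l q) (final_seg G l q) = l"
    unfolding init_seg_def final_seg_def factor_def by auto
qed

lemma rg_init_seg_sc_final_seg:
  assumes "l \<in> Mor G" "q \<le> dg G l"
  shows "rg G (init_seg G l q) = rg G l" "sc G (final_seg G l q) = sc G l"
  using cmp_mor(2,3)[OF init_final_seg(1-3)[OF assms]] by (simp_all add: init_final_seg(6)[OF assms])

lemma seg_cmp:
  assumes "a \<in> Mor G" "b \<in> Mor G" "sc G a = rg G b" "dg G a = q"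
  shows "init_seg G (cmp G a b) q = a" "final_seg G (cmp G a b) q = b"
proof -
  let ?l = "cmp G a b"
  have l: "?l \<in> Mor G" and d: "dg G ?l = dadd q (dg G b)"
    using cmp_mor[OF assms(1-3)] assms(4) by auto
  then have "dg G ?l = dadd q (dsub (dg G ?l) q)" by simp
  then have "factor G ?l q = (a, b)"
    unfolding factor_def by (rule the1_equality[OF factorisation_ex1[OF l]]) (use assms d in simp)
  then show "init_seg G (cmp G a b) q = a" "final_seg G (cmp G a b) q = b"
    unfolding init_seg_def final_seg_def by auto
qed

lemma seg_full:
  assumes "l \<in> Mor G"
  shows "init_seg G l (dg G l) = l" "final_seg G l (dg G l) = sc G l"
  using seg_cmp[of l "sc G l" "dg G l"] mor_rg_sc[OF assms] assms by auto

lemma seg_dzero: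
  assumes "l \<in> Mor G"
  shows "init_seg G l dzero = rg G l" "final_seg G l dzero = l"
  using seg_cmp[of "rg G l" l dzero] mor_rg_sc[OF assms] dg_rg_sc[OF assms] assms by auto

lemma init_seg_init_seg:
  assumes "l \<in> Mor G" "p \<le> q" "q \<le> dg G l"
  shows "init_seg G (init_seg G l q) p = init_seg G l p"
    "cmp G (final_seg G (init_seg G l q) p) (final_seg G l q) = final_seg G l p"
proof -
  let ?A = "init_seg G l q" and ?C = "final_seg G l q"
  note A = init_final_seg[OF assms(1,3)]
  have p: "p \<le> dg G ?A"
    using A assms by simp
  let ?a = "init_seg G ?A p" and ?b = "final_seg G ?A p"
  note a = init_final_seg[OF A(1) p]
  have bC: "sc G ?b = rg G ?C"
    using A(3) rg_init_seg_sc_final_seg(2)[OF A(1) p] by simp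
  have "l = cmp G ?a (cmp G ?b ?C)"
    using cmp_assoc[of ?a ?b ?C] A a bC by simp
  moreover have "cmp G ?b ?C \<in> Mor G" "rg G (cmp G ?b ?C) = rg G ?b"
    using cmp_mor[of ?b ?C] a A bC by auto
  ultimately show "init_seg G ?A p = init_seg G l p" "cmp G ?b ?C = final_seg G l p"
    using seg_cmp[of ?a "cmp G ?b ?C" p] a by auto
qed

lemma init_seg_cmp:
  assumes "a \<in> Mor G" "b \<in> Mor G" "sc G a = rg G b" "q \<le> dg G a"
  shows "init_seg G (cmp G a b) q = init_seg G a q"
proof -
  note s = init_final_seg[OF assms(1,4)]
  have r: "sc G (final_seg G a q) = rg G b"
    using rg_init_seg_sc_final_seg[OF assms(1,4)] assms by simp
  have "cmp G a b = cmp G (init_seg G a q) (cmp G (final_seg G a q) b)"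
    using cmp_assoc[of "init_seg G a q" "final_seg G a q" b] s r assms by simp
  then show ?thesis
    using seg_cmp[of "init_seg G a q" "cmp G (final_seg G a q) b" q] cmp_mor[of "final_seg G a q" b]
      s r assms by auto
qed

lemma pathsD:
  assumes "x \<in> paths G"
  shows "\<And>m n. \<not> m \<le> n \<Longrightarrow> x m n = undefined"
    "\<And>m. x m m \<in> vertices G"
    "\<And>m n. m \<le> n \<Longrightarrow> x m n \<in> Mor G"
    "\<And>m n. m \<le> n \<Longrightarrow> dg G (x m n) = dsub n m"
    "\<And>m n. m \<le> n \<Longrightarrow> rg G (x m n) = x m m"
    "\<And>m n. m \<le> n \<Longrightarrow> sc G (x m n) = x n n"
    "\<And>m n p. m \<le> n \<Longrightarrow> n \<le> p \<Longrightarrow> cmp G (x m n) (x n p) = x m p"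
  using assms unfolding paths_def by auto

lemma prange_vertex: "x \<in> paths G \<Longrightarrow> prange x \<in> vertices G"
  using pathsD(2) by (simp add: prange_def)

lemma path_segs:
  assumes "x \<in> paths G" "p \<le> q"
  shows "x p q = final_seg G (x dzero q) p" "init_seg G (x dzero q) p = x dzero p"
proof -
  have "x dzero q = cmp G (x dzero p) (x p q)"
    using pathsD(7)[OF assms(1), of dzero p q] assms by simp
  then show "x p q = final_seg G (x dzero q) p" "init_seg G (x dzero q) p = x dzero p"
    using seg_cmp[of "x dzero p" "x p q" p] pathsD[OF assms(1)] assms(2) by auto
qed

lemma paths_eqI:
  assumes "x \<in> paths G" "y \<in> paths G" "\<And>q. x dzero q = y dzero q"
  shows "x = y"
proof (intro ext)
  fix p q
  show "x p q = y p q"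
  proof (cases "p \<le> q")
    case True
    then show ?thesis
      using path_segs(1)[OF assms(1) True] path_segs(1)[OF assms(2) True] assms(3)[of q] by simp
  next
    case False
    then show ?thesis
      using pathsD(1)[OF assms(1) False] pathsD(1)[OF assms(2) False] by simp
  qed
qed

lemma path_of_inits:
  assumes f: "\<And>q. f q \<in> Mor G" "\<And>q. dg G (f q) = q"
    and consistent: "\<And>q q'. q \<le> q' \<Longrightarrow> init_seg G (f q') q = f q"
  shows "path_of_inits G f \<in> paths G" "\<And>q. path_of_inits G f dzero q = f q"
proof -
  let ?x = "path_of_inits G f"
  show "\<And>q. ?x dzero q = f q"
    unfolding path_of_inits_def using seg_dzero f by simp
  have diag: "?x m m = sc G (f m)" for m
    using seg_full(2)[OF f(1), of m] f(2)[of m] unfolding path_of_inits_def by simp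
  have mor: "?x m n \<in> Mor G \<and> dg G (?x m n) = dsub n m \<and> rg G (?x m n) = ?x m m \<and>
      sc G (?x m n) = ?x n n" if mn: "m \<le> n" for m n
  proof -
    have m: "m \<le> dg G (f n)"
      using f mn by simp
    have "rg G (final_seg G (f n) m) = sc G (f m)"
      using init_final_seg(3)[OF f(1) m] consistent[OF mn] by simp
    then show ?thesis
      using init_final_seg[OF f(1) m] rg_init_seg_sc_final_seg(2)[OF f(1) m] mn f diag
      unfolding path_of_inits_def by simp
  qed
  have cmp: "cmp G (?x m n) (?x n p) = ?x m p" if "m \<le> n" "n \<le> p" for m n p
  proof -
    have "cmp G (final_seg G (init_seg G (f p) n) m) (final_seg G (f p) n) = final_seg G (f p) m"
      using init_seg_init_seg(2)[OF f(1), of m n] that f by simp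
    then show ?thesis
      using that consistent[of n p] order_trans[OF that] unfolding path_of_inits_def by simp
  qed
  show "?x \<in> paths G"
    unfolding paths_def using diag vertices_rg_sc(2)[OF f(1)] mor cmp
    by (auto simp: path_of_inits_def)
qed

lemma loop_pow:
  assumes l: "l \<in> Mor G" "sc G l = rg G l"
  shows "loop_pow G l N \<in> Mor G" "rg G (loop_pow G l N) = rg G l" "sc G (loop_pow G l N) = rg G l"
    "dg G (loop_pow G l N) = (\<lambda>i. N * dg G l i)"
proof (induction N)
  case 0
  show "loop_pow G l 0 \<in> Mor G" "rg G (loop_pow G l 0) = rg G l" "sc G (loop_pow G l 0) = rg G l"
    "dg G (loop_pow G l 0) = (\<lambda>i. 0 * dg G l i)"
    using mor_rg_sc[OF l(1)] dg_rg_sc[OF l(1)] by (simp_all add: loop_pow_def dzero_def)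
next
  case (Suc N)
  have "loop_pow G l (Suc N) = cmp G (loop_pow G l N) l"
    by (simp add: loop_pow_def)
  then show "loop_pow G l (Suc N) \<in> Mor G" "rg G (loop_pow G l (Suc N)) = rg G l"
    "sc G (loop_pow G l (Suc N)) = rg G l" "dg G (loop_pow G l (Suc N)) = (\<lambda>i. Suc N * dg G l i)"
    using cmp_mor[of "loop_pow G l N" l] Suc l by (auto simp: dadd_def)
qed

lemma loop_pow_large:
  assumes l: "l \<in> Mor G" "sc G l = rg G l" "\<forall>i. 0 < dg G l i"
  shows "d \<le> dg G (loop_pow G l (Max (range d)))"
  unfolding loop_pow(4)[OF l(1,2)] le_fun_def
proof
  fix i
  have "d i \<le> Max (range d)"
    using le_Max_range[of d] by (simp add: le_fun_def)
  also have "\<dots> \<le> Max (range d) * dg G l i"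
    using mult_le_mono2[of 1 "dg G l i" "Max (range d)"] l(3) by (simp add: Suc_le_eq)
  finally show "d i \<le> Max (range d) * dg G l i" .
qed

lemma init_seg_loop_pow:
  assumes l: "l \<in> Mor G" "sc G l = rg G l" and "N \<le> N'" "q \<le> dg G (loop_pow G l N)"
  shows "init_seg G (loop_pow G l N') q = init_seg G (loop_pow G l N) q"
  using assms(3)
proof (induction N' rule: dec_induct)
  case (step N')
  have "q \<le> dg G (loop_pow G l N')"
    using assms(4) step(1) unfolding loop_pow(4)[OF l] le_fun_def
    by (meson le_trans mult_le_mono1)
  then have "init_seg G (cmp G (loop_pow G l N') l) q = init_seg G (loop_pow G l N') q"
    using init_seg_cmp loop_pow[OF l] l by simp
  then show ?case
    using step(3) by (simp add: loop_pow_def)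
qed simp

text \<open>The path \<open>\<lambda>\<lambda>\<lambda>\<dots>\<close>: its segment of degree \<open>q\<close> is read off from a large enough power of \<open>\<lambda>\<close>.\<close>

lemma cyl_nonempty_of_loop:
  assumes l: "l \<in> Mor G" "sc G l = rg G l" "\<forall>i. 0 < dg G l i"
  shows "cyl G (rg G l) \<noteq> {}"
proof -
  let ?L = "\<lambda>N. loop_pow G l N"
  let ?N = "\<lambda>q. Max (range q)"
  have large: "q \<le> dg G (?L (?N q))" for q
    by (rule loop_pow_large[OF l])
  define f where "f q = init_seg G (?L (?N q)) q" for q
  have f: "f q \<in> Mor G" "dg G (f q) = q" for q
    unfolding f_def using init_final_seg[OF loop_pow(1)[OF l(1,2)] large] by auto
  have consistent: "init_seg G (f q') q = f q" if "q \<le> q'" for q q'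
  proof -
    let ?M = "max (?N q) (?N q')"
    have q': "q \<le> dg G (?L (?N q'))"
      using that large[of q'] by (rule order_trans)
    have "init_seg G (f q') q = init_seg G (?L (?N q')) q"
      unfolding f_def by (rule init_seg_init_seg(1)[OF loop_pow(1)[OF l(1,2)] that large])
    also have "\<dots> = init_seg G (?L ?M) q"
      by (rule init_seg_loop_pow[OF l(1,2) max.cobounded2 q', symmetric])
    also have "\<dots> = f q"
      unfolding f_def by (rule init_seg_loop_pow[OF l(1,2) max.cobounded1 large])
    finally show ?thesis .
  qed
  note x = path_of_inits[OF f consistent]
  have "prange (path_of_inits G f) = f dzero"
    unfolding prange_def by (rule x(2))
  also have "\<dots> = rg G l"
    unfolding f_def using seg_dzero(1)[OF loop_pow(1)[OF l(1,2)]] loop_pow(2)[OF l(1,2)] by simp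
  finally have "prange (path_of_inits G f) = rg G l" .
  then show ?thesis
    using x(1) unfolding cyl_def by blast
qed

lemma shift_apply: "shift n x p q = x (dadd n p) (dadd n q)"
  by (simp add: shift_def)

lemma shift_shift: "shift a (shift b x) = shift (dadd b a) x"
  by (simp add: shift_def dadd_assoc)

lemma prange_shift: "prange (shift n x) = x n n"
  by (simp add: prange_def shift_apply)

lemma shift_in_paths:
  assumes "x \<in> paths G"
  shows "shift n x \<in> paths G"
  using pathsD[OF assms] unfolding paths_def by (simp add: shift_apply dsub_dadd_dadd)

lemma cmp_path_inits:
  assumes x: "x \<in> paths G" and l: "l \<in> Mor G" "sc G l = prange x"
  shows "cmp G l (x dzero q) \<in> Mor G" "dg G (cmp G l (x dzero q)) = dadd (dg G l) q"
    "sc G (cmp G l (x dzero q)) = x q q"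
    "p \<le> q \<Longrightarrow> cmp G l (x dzero q) = cmp G (cmp G l (x dzero p)) (x p q)"
proof -
  note P = pathsD[OF x]
  have l': "sc G l = rg G (x dzero p)" for p
    using l(2) P(5)[of dzero p] by (simp add: prange_def)
  show "cmp G l (x dzero q) \<in> Mor G" "dg G (cmp G l (x dzero q)) = dadd (dg G l) q"
    "sc G (cmp G l (x dzero q)) = x q q"
    using cmp_mor[OF l(1) P(3) l'] P(4,6) by auto
  show "cmp G l (x dzero q) = cmp G (cmp G l (x dzero p)) (x p q)" if "p \<le> q"
    using P(7)[of dzero p q] cmp_assoc[OF l(1) P(3) P(3) l'] P(5,6) that by simp
qed

lemma pcat_exists:
  assumes x: "x \<in> paths G" and l: "l \<in> Mor G" "sc G l = prange x"
  shows "\<exists>y\<in>paths G. y dzero (dg G l) = l \<and> shift (dg G l) y = x"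
proof -
  let ?d = "dg G l"
  define X where "X q = cmp G l (x dzero q)" for q
  note X = cmp_path_inits[OF x l, folded X_def]
  have xpq: "x p q \<in> Mor G" "rg G (x p q) = sc G (X p)" if "p \<le> q" for p q
    using pathsD(3,5)[OF x that] X(3) by auto
  define f where "f q = init_seg G (X q) q" for q
  have f: "f q \<in> Mor G" "dg G (f q) = q" for q
    unfolding f_def using init_final_seg[OF X(1), of q] X(2) by auto
  have consistent: "init_seg G (f q') q = f q" if "q \<le> q'" for q q'
  proof -
    have "init_seg G (f q') q = init_seg G (X q') q"
      unfolding f_def by (rule init_seg_init_seg(1)) (use X(1,2) that in auto)
    also have "\<dots> = init_seg G (cmp G (X q) (x q q')) q"
      using X(4)[OF that] by simp
    also have "\<dots> = f q"
      unfolding f_def by (rule init_seg_cmp) (use X xpq[OF that] in auto)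
    finally show ?thesis .
  qed
  let ?y = "path_of_inits G f"
  note y = path_of_inits[OF f consistent]
  have "?y dzero ?d = f ?d"
    by (rule y(2))
  also have "\<dots> = l"
    using seg_cmp(1)[of l "x dzero ?d" ?d] l pathsD(3,5)[OF x, of dzero ?d]
    by (simp add: f_def X_def prange_def)
  finally have "?y dzero ?d = l" .
  moreover have "shift ?d ?y = x"
  proof (intro ext)
    fix p q
    show "shift ?d ?y p q = x p q"
    proof (cases "p \<le> q")
      case True
      have "X (dadd ?d q) = cmp G (X q) (x q (dadd ?d q))"
        by (rule X(4)) simp
      then have "init_seg G (X (dadd ?d q)) (dadd ?d q) = X q"
        using seg_cmp(1)[of "X q" "x q (dadd ?d q)" "dadd ?d q"] X(1,2) xpq[of q "dadd ?d q"]
        by simp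
      moreover have "final_seg G (X q) (dadd ?d p) = x p q"
        using X(4)[OF True] seg_cmp(2)[of "X p" "x p q" "dadd ?d p"] X(1,2) xpq[OF True] by simp
      ultimately show ?thesis
        using True unfolding shift_apply path_of_inits_def f_def by simp
    next
      case False
      then show ?thesis
        using pathsD(1)[OF x False] unfolding shift_apply path_of_inits_def by simp
    qed
  qed
  ultimately show ?thesis
    using y(1) by blast
qed

lemma pcat_unique:
  assumes "y \<in> paths G" "y dzero (dg G l) = l" "shift (dg G l) y = x"
    and "y' \<in> paths G" "y' dzero (dg G l) = l" "shift (dg G l) y' = x"
  shows "y = y'"
proof -
  have init: "y dzero q = init_seg G (cmp G l (x dzero q)) q"
    if y: "y \<in> paths G" "y dzero (dg G l) = l" "shift (dg G l) y = x" for y q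
  proof -
    let ?d = "dg G l"
    have "y dzero (dadd ?d q) = cmp G (y dzero ?d) (y ?d (dadd ?d q))"
      using pathsD(7)[OF y(1), of dzero ?d "dadd ?d q"] by simp
    also have "\<dots> = cmp G l (x dzero q)"
      using y(2,3) shift_apply[of ?d y dzero q] by simp
    finally show ?thesis
      using path_segs(2)[OF y(1), of q "dadd ?d q"] by simp
  qed
  show ?thesis
    using init[OF assms(1-3)] init[OF assms(4-6)] by (intro paths_eqI[OF assms(1,4)]) simp
qed

lemma pcat:
  assumes "x \<in> paths G" "l \<in> Mor G" "sc G l = prange x"
  shows "pcat G l x \<in> paths G" "pcat G l x dzero (dg G l) = l" "shift (dg G l) (pcat G l x) = x"
proof -
  have "\<exists>!y. y \<in> paths G \<and> y dzero (dg G l) = l \<and> shift (dg G l) y = x"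
    using pcat_exists[OF assms] pcat_unique by blast
  from theI'[OF this]
  show "pcat G l x \<in> paths G" "pcat G l x dzero (dg G l) = l" "shift (dg G l) (pcat G l x) = x"
    unfolding pcat_def by auto
qed

lemma pcat_eqI:
  assumes "x \<in> paths G" "l \<in> Mor G" "sc G l = prange x"
    and "y \<in> paths G" "y dzero (dg G l) = l" "shift (dg G l) y = x"
  shows "pcat G l x = y"
  using pcat[OF assms(1-3)] assms(4-6) by (blast intro: pcat_unique)

lemma pcat_init_shift:
  assumes "x \<in> paths G"
  shows "pcat G (x dzero d) (shift d x) = x"
proof -
  have "dg G (x dzero d) = d"
    using pathsD(4)[OF assms, of dzero d] by simp
  then show ?thesis
    using pathsD[OF assms] shift_in_paths[OF assms] prange_shift[of d x] assms
    by (intro pcat_eqI) auto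
qed

lemma prange_pcat:
  assumes "x \<in> paths G" "l \<in> Mor G" "sc G l = prange x"
  shows "prange (pcat G l x) = rg G l"
  using pathsD(5)[OF pcat(1)[OF assms], of dzero "dg G l"] pcat(2)[OF assms]
  unfolding prange_def by simp

lemma pcat_cancel:
  assumes "x \<in> paths G" "l \<in> Mor G" "sc G l = prange x" "l' \<in> Mor G" "sc G l' = prange x"
    and "dg G l = dg G l'" "pcat G l x = pcat G l' x"
  shows "l = l'"
proof -
  have "l = pcat G l x dzero (dg G l)"
    using pcat(2)[OF assms(1-3)] by simp
  also have "\<dots> = pcat G l' x dzero (dg G l')"
    using assms(6,7) by simp
  also have "\<dots> = l'"
    using pcat(2)[OF assms(1,4,5)] .
  finally show ?thesis .
qed

end

locale strongly_connected_k_graph = k_graph +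
  assumes strongly_connected: "strongly_connected G"
begin

lemma strongly_connectedD:
  "v \<in> vertices G \<Longrightarrow> w \<in> vertices G \<Longrightarrow> \<exists>l\<in>Mor G. rg G l = v \<and> sc G l = w"
  using strongly_connected unfolding strongly_connected_def by blast

text \<open>Go out to an edge of degree \<open>e\<^sub>j\<close> and come back, once for each coordinate \<open>j\<close>.\<close>

lemma loop_positive_on:
  assumes "finite S" "u \<in> vertices G"
  shows "\<exists>l\<in>Mor G. rg G l = u \<and> sc G l = u \<and> (\<forall>i\<in>S. 0 < dg G l i)"
  using assms
proof (induction S rule: finite_induct)
  case empty
  then show ?case
    using verticesD[of u] by auto
next
  case (insert j S)
  obtain l where l: "l \<in> Mor G" "rg G l = u" "sc G l = u" "\<forall>i\<in>S. 0 < dg G l i"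
    using insert by blast
  obtain e where e: "e \<in> Mor G" "dg G e = unitdeg j"
    using Lam_unitdeg_nonempty[of j] unfolding Lam_def by blast
  obtain a where a: "a \<in> Mor G" "rg G a = u" "sc G a = rg G e"
    using strongly_connectedD[OF insert(4) vertices_rg_sc(1)[OF e(1)]] by blast
  obtain b where b: "b \<in> Mor G" "rg G b = sc G e" "sc G b = u"
    using strongly_connectedD[OF vertices_rg_sc(2)[OF e(1)] insert(4)] by blast
  let ?L = "cmp G l (cmp G a (cmp G e b))"
  have L: "?L \<in> Mor G" "rg G ?L = u" "sc G ?L = u"
    "dg G ?L = dadd (dg G l) (dadd (dg G a) (dadd (unitdeg j) (dg G b)))"
    using cmp_mor[of e b] cmp_mor[of a "cmp G e b"] cmp_mor[of l "cmp G a (cmp G e b)"] l a b e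
    by auto
  have "\<forall>i\<in>insert j S. 0 < dg G ?L i"
    using L(4) l(4) by (auto simp: dadd_def unitdeg_def)
  then show ?case
    using L by blast
qed

lemma positive_loop:
  assumes "u \<in> vertices G"
  obtains l where "l \<in> Mor G" "rg G l = u" "sc G l = u" "\<forall>i. 0 < dg G l i"
  using loop_positive_on[OF finite_UNIV assms] by blast

lemma cyl_nonempty:
  assumes "u \<in> vertices G"
  shows "cyl G u \<noteq> {}"
  using cyl_nonempty_of_loop positive_loop[OF assms] by metis

lemma ex_mor_sc_dg:
  assumes "u \<in> vertices G"
  shows "\<exists>l\<in>Mor G. sc G l = u \<and> dg G l = d"
proof -
  obtain l where l: "l \<in> Mor G" "sc G l = rg G l" "\<forall>i. 0 < dg G l i" "sc G l = u"
    using positive_loop[OF assms] by metis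
  let ?L = "loop_pow G l (Max (range d))"
  have L: "?L \<in> Mor G" "sc G ?L = u" "d \<le> dg G ?L"
    using loop_pow[OF l(1,2)] loop_pow_large[OF l(1-3)] l(2,4) by auto
  show ?thesis
    using init_final_seg[OF L(1) dsub_le] rg_init_seg_sc_final_seg(2)[OF L(1) dsub_le] L
      dsub_dsub[OF L(3)] by metis
qed

lemma shifts_agree_of_cyl:
  assumes v: "v \<in> vertices G" and agree: "\<forall>x\<in>cyl G v. shift m x = shift n x"
  shows "shifts_agree G m n"
proof
  fix x assume x: "x \<in> paths G"
  obtain l where l: "l \<in> Mor G" "rg G l = v" "sc G l = prange x"
    using strongly_connectedD[OF v prange_vertex[OF x]] by blast
  let ?z = "pcat G l x" and ?d = "dg G l"
  have z: "?z \<in> cyl G v"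
    using pcat(1)[OF x l(1,3)] prange_pcat[OF x l(1,3)] l(2) unfolding cyl_def by simp
  have "shift m x = shift m (shift ?d ?z)"
    using pcat(3)[OF x l(1,3)] by simp
  also have "\<dots> = shift ?d (shift m ?z)"
    by (simp add: shift_shift dadd_commute)
  also have "\<dots> = shift ?d (shift n ?z)"
    using agree z by simp
  also have "\<dots> = shift n (shift ?d ?z)"
    by (simp add: shift_shift dadd_commute)
  finally show "shift m x = shift n x"
    using pcat(3)[OF x l(1,3)] by simp
qed

text \<open>If \<open>\<sigma>\<^sup>m = \<sigma>\<^sup>n\<close>, then \<open>y(0,n) = (\<mu>y)(m,m+n)\<close>, the tail of \<open>\<mu> y(0,m)\<close>, for any \<open>\<mu> \<in> \<Lambda>\<^sup>n r(y)\<close>.\<close>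

lemma shifts_agree_init_determined:
  assumes agree: "shifts_agree G m n"
    and y: "y \<in> paths G" and y': "y' \<in> paths G" "prange y' = prange y"
    and init: "y dzero m = y' dzero m"
  shows "y dzero n = y' dzero n"
proof -
  obtain mu where mu: "mu \<in> Mor G" "sc G mu = prange y" "dg G mu = n"
    using ex_mor_sc_dg[OF prange_vertex[OF y]] by blast
  have tail: "z dzero n = final_seg G (cmp G mu (z dzero m)) m"
    if z: "z \<in> paths G" "prange z = prange y" for z
  proof -
    let ?Z = "pcat G mu z"
    have Z: "?Z \<in> paths G" "?Z dzero n = mu" "shift n ?Z = z" "shift m ?Z = z"
      using pcat[OF z(1) mu(1)] mu z agree by auto
    have "z dzero n = ?Z m (dadd m n)"
      using Z(4) shift_apply[of m ?Z dzero n] by simp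
    also have "\<dots> = final_seg G (?Z dzero (dadd m n)) m"
      using path_segs(1)[OF Z(1), of m "dadd m n"] by simp
    also have "?Z dzero (dadd m n) = cmp G (?Z dzero n) (?Z n (dadd n m))"
      using pathsD(7)[OF Z(1), of dzero n "dadd n m"] dadd_commute[of m n] by simp
    also have "\<dots> = cmp G mu (z dzero m)"
      using Z(2,3) shift_apply[of n ?Z dzero m] by simp
    finally show ?thesis .
  qed
  show ?thesis
    using tail[OF y] tail[OF y'] init by simp
qed

lemma pcat_refactor:
  assumes agree: "shifts_agree G m n" and mu: "mu \<in> Lam G m" and x: "x \<in> cyl G (sc G mu)"
  shows "sc G (pcat G mu x dzero n) = prange x" "pcat G (pcat G mu x dzero n) x = pcat G mu x"
proof -
  have mu': "mu \<in> Mor G" "dg G mu = m" "sc G mu = prange x" and x': "x \<in> paths G"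
    using mu x by (auto simp: Lam_def cyl_def)
  let ?y = "pcat G mu x"
  have y: "?y \<in> paths G" "shift n ?y = x"
    using pcat[OF x' mu'(1,3)] agree mu'(2) by auto
  show "sc G (?y dzero n) = prange x"
    using pathsD(6)[OF y(1), of dzero n] prange_shift[of n ?y] y(2) by simp
  show "pcat G (?y dzero n) x = ?y"
    using pcat_init_shift[OF y(1), of n] y(2) by simp
qed

lemma pcat_init_seg_indep:
  assumes agree: "shifts_agree G m n" and mu: "mu \<in> Lam G m"
    and x: "x \<in> cyl G (sc G mu)" and x': "x' \<in> cyl G (sc G mu)"
  shows "pcat G mu x dzero n = pcat G mu x' dzero n"
proof (rule shifts_agree_init_determined[OF agree])
  have mu': "mu \<in> Mor G" "dg G mu = m"
    using mu by (auto simp: Lam_def)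
  have xp: "x \<in> paths G" "sc G mu = prange x" and xp': "x' \<in> paths G" "sc G mu = prange x'"
    using x x' by (auto simp: cyl_def)
  show "pcat G mu x \<in> paths G" "pcat G mu x' \<in> paths G"
    using pcat(1) xp xp' mu' by auto
  show "prange (pcat G mu x') = prange (pcat G mu x)"
    using prange_pcat xp xp' mu' by metis
  show "pcat G mu x dzero m = pcat G mu x' dzero m"
    using pcat(2)[OF xp(1) mu'(1) xp(2)] pcat(2)[OF xp'(1) mu'(1) xp'(2)] mu'(2) by simp
qed

lemma theta_ex1:
  assumes agree: "shifts_agree G m n" and mu: "mu \<in> Lam G m"
  shows "\<exists>!nu. nu \<in> Lam G n \<and>
          (\<forall>x\<in>cyl G (sc G mu). sc G nu = prange x \<and> pcat G mu x = pcat G nu x)"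
proof -
  have mu': "mu \<in> Mor G"
    using mu by (auto simp: Lam_def)
  obtain x0 where x0: "x0 \<in> cyl G (sc G mu)"
    using cyl_nonempty[OF vertices_rg_sc(2)[OF mu']] by blast
  have x0': "x0 \<in> paths G" "sc G mu = prange x0"
    using x0 by (auto simp: cyl_def)
  define nu0 where "nu0 = pcat G mu x0 dzero n"
  have nu0: "nu0 \<in> Lam G n"
    unfolding nu0_def Lam_def using pathsD(3,4)[OF pcat(1)[OF x0'(1) mu' x0'(2)], of dzero n] by simp
  have spec: "sc G nu0 = prange x \<and> pcat G mu x = pcat G nu0 x" if x: "x \<in> cyl G (sc G mu)" for x
    using pcat_refactor[OF agree mu x] pcat_init_seg_indep[OF agree mu x x0] unfolding nu0_def
    by simp
  show ?thesis
  proof (rule ex1I[of _ nu0])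
    fix nu
    assume nu: "nu \<in> Lam G n \<and> (\<forall>x\<in>cyl G (sc G mu). sc G nu = prange x \<and> pcat G mu x = pcat G nu x)"
    then have "nu \<in> Mor G" "sc G nu = prange x0" "dg G nu = n" "pcat G nu x0 = pcat G nu0 x0"
      using spec[OF x0] x0 by (auto simp: Lam_def)
    then show "nu = nu0"
      using pcat_cancel[OF x0'(1)] spec[OF x0] nu0 by (auto simp: Lam_def)
  qed (use nu0 spec in blast)
qed

lemma theta:
  assumes agree: "shifts_agree G m n" and mu: "mu \<in> Lam G m"
  shows "theta G m n mu \<in> Lam G n"
    "\<forall>x\<in>cyl G (sc G mu). sc G (theta G m n mu) = prange x \<and> pcat G mu x = pcat G (theta G m n mu) x"
proof -
  have "theta G m n mu \<in> Lam G n \<and>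
    (\<forall>x\<in>cyl G (sc G mu). sc G (theta G m n mu) = prange x \<and> pcat G mu x = pcat G (theta G m n mu) x)"
    unfolding theta_def by (rule theI'[OF theta_ex1[OF assms]])
  then show "theta G m n mu \<in> Lam G n"
    "\<forall>x\<in>cyl G (sc G mu). sc G (theta G m n mu) = prange x \<and> pcat G mu x = pcat G (theta G m n mu) x"
    by auto
qed

lemma theta_eqI:
  assumes agree: "shifts_agree G m n" and mu: "mu \<in> Lam G m" and nu: "nu \<in> Lam G n"
    and spec: "\<forall>x\<in>cyl G (sc G mu). sc G nu = prange x \<and> pcat G mu x = pcat G nu x"
  shows "theta G m n mu = nu"
  unfolding theta_def by (rule the1_equality[OF theta_ex1[OF agree mu]]) (use nu spec in auto)

lemma rg_sc_theta:
  assumes agree: "shifts_agree G m n" and mu: "mu \<in> Lam G m"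
  shows "rg G (theta G m n mu) = rg G mu" "sc G (theta G m n mu) = sc G mu"
proof -
  have mu': "mu \<in> Mor G" and nu: "theta G m n mu \<in> Mor G"
    using mu theta(1)[OF assms] by (auto simp: Lam_def)
  obtain x where x: "x \<in> cyl G (sc G mu)"
    using cyl_nonempty[OF vertices_rg_sc(2)[OF mu']] by blast
  have x': "x \<in> paths G" "sc G mu = prange x"
    using x by (auto simp: cyl_def)
  have sc: "sc G (theta G m n mu) = prange x" and eq: "pcat G mu x = pcat G (theta G m n mu) x"
    using theta(2)[OF assms] x by auto
  show "sc G (theta G m n mu) = sc G mu"
    using sc x'(2) by simp
  show "rg G (theta G m n mu) = rg G mu"
    using prange_pcat[OF x'(1) mu' x'(2)] prange_pcat[OF x'(1) nu sc] eq by simp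
qed

lemma theta_self:
  assumes "mu \<in> Lam G q"
  shows "theta G q q mu = mu"
  by (rule theta_eqI) (use assms in \<open>auto simp: cyl_def\<close>)

lemma theta_theta:
  assumes mn: "shifts_agree G m n" and np: "shifts_agree G n p" and mu: "mu \<in> Lam G m"
  shows "theta G n p (theta G m n mu) = theta G m p mu"
proof -
  have mp: "shifts_agree G m p"
    using mn np by simp
  let ?nu = "theta G m n mu"
  let ?rho = "theta G n p ?nu"
  have nu: "?nu \<in> Lam G n" "sc G ?nu = sc G mu"
    and nu_spec: "\<forall>x\<in>cyl G (sc G mu). sc G ?nu = prange x \<and> pcat G mu x = pcat G ?nu x"
    using theta[OF mn mu] rg_sc_theta(2)[OF mn mu] by auto
  have rho: "?rho \<in> Lam G p"
    and rho_spec: "\<forall>x\<in>cyl G (sc G ?nu). sc G ?rho = prange x \<and> pcat G ?nu x = pcat G ?rho x"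
    using theta[OF np nu(1)] by auto
  show ?thesis
    by (rule sym, rule theta_eqI[OF mp mu rho]) (use nu_spec rho_spec nu(2) in auto)
qed

lemma bij_betw_theta:
  assumes agree: "shifts_agree G m n"
  shows "bij_betw (theta G m n) (Lam G m) (Lam G n)"
    "\<forall>mu\<in>Lam G m. theta G n m (theta G m n mu) = mu"
    "\<forall>nu\<in>Lam G n. theta G m n (theta G n m nu) = nu"
proof -
  have agree': "shifts_agree G n m"
    using agree by simp
  show inv: "\<forall>mu\<in>Lam G m. theta G n m (theta G m n mu) = mu"
    "\<forall>nu\<in>Lam G n. theta G m n (theta G n m nu) = nu"
    using theta_theta[OF agree agree'] theta_theta[OF agree' agree] theta_self by simp_all
  show "bij_betw (theta G m n) (Lam G m) (Lam G n)"
    by (rule bij_betw_byWitness[OF inv]) (use theta(1)[OF agree] theta(1)[OF agree'] in auto)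
qed

end

theorem lemma5p1:
  fixes G :: "('a, 'k::finite) kgraph" and v :: 'a and m n :: "'k \<Rightarrow> nat"
  assumes "kgraph G" and "finite_kgraph G" and "strongly_connected G"
    and "v \<in> vertices G"
    and "\<forall>x\<in>cyl G v. shift m x = shift n x"
  shows "(\<forall>x\<in>paths G. shift m x = shift n x)
    \<and> (\<forall>mu\<in>Lam G m. \<exists>!nu. nu \<in> Lam G n \<and>
          (\<forall>x\<in>cyl G (sc G mu). sc G nu = prange x \<and> pcat G mu x = pcat G nu x))
    \<and> (\<forall>mu\<in>Lam G m. theta G m n mu \<in> Lam G n \<and>
          rg G (theta G m n mu) = rg G mu \<and> sc G (theta G m n mu) = sc G mu)
    \<and> (\<forall>w p. w \<in> vertices G \<and> (\<forall>x\<in>cyl G w. shift n x = shift p x) \<longrightarrow>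
          (\<forall>x\<in>paths G. shift m x = shift p x) \<and>
          (\<forall>mu\<in>Lam G m. theta G n p (theta G m n mu) = theta G m p mu))
    \<and> (\<forall>q. \<forall>mu\<in>Lam G q. theta G q q mu = mu)
    \<and> bij_betw (theta G m n) (Lam G m) (Lam G n)
    \<and> (\<forall>mu\<in>Lam G m. theta G n m (theta G m n mu) = mu)
    \<and> (\<forall>nu\<in>Lam G n. theta G m n (theta G n m nu) = nu)"
proof -
  interpret strongly_connected_k_graph G
    using assms(1,3) by unfold_locales
  have mn: "shifts_agree G m n"
    by (rule shifts_agree_of_cyl[OF assms(4,5)])
  have transfer: "shifts_agree G m p \<and> (\<forall>mu\<in>Lam G m. theta G n p (theta G m n mu) = theta G m p mu)"
    if "w \<in> vertices G \<and> (\<forall>x\<in>cyl G w. shift n x = shift p x)" for w p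
  proof -
    have "shifts_agree G n p"
      using shifts_agree_of_cyl that by blast
    then show ?thesis
      using mn theta_theta[OF mn] by simp
  qed
  show ?thesis
    using mn theta_ex1[OF mn] theta(1)[OF mn] rg_sc_theta[OF mn] transfer theta_self
      bij_betw_theta[OF mn] by blast
qed

end
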